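(* Let $n,d\ge1$ and let $W$ be a word over a totally ordered alphabet. If $W$ contains $n$ pairwise non-overlapping occurrences of the same word $u$ of length $nd$, then $W$ is $(n,d)$-reducible.
   Context: A subword is a contiguous factor. Two words $u,v$ are comparable if neither is a prefix of the other; for comparable $u,v$ write $u\succ v$ if at the first position where they differ the letter of $u$ is larger. $W$ is $n$-divisible if it contains a subword $u_1\cdots u_n$ with nonempty $u_i$ and $u_1\succ\dots\succ u_n$. $W$ is $(n,d)$-reducible if it is $n$-divisible or contains a subword $u^d$ with $u$ nonempty. *)

theory Defs
  imports Main
begin

definition subword :: "'a list \<Rightarrow> 'a list \<Rightarrow> bool" where
  "subword v W \<longleftrightarrow> (\<exists>p s. W = p @ v @ s)"

definition comparable :: "'a list \<Rightarrow> 'a list \<Rightarrow> bool" where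
  "comparable u v \<longleftrightarrow> \<not> (\<exists>z. v = u @ z) \<and> \<not> (\<exists>z. u = v @ z)"

definition succ_word :: "'a::linorder list \<Rightarrow> 'a list \<Rightarrow> bool" where
  "succ_word u v \<longleftrightarrow> comparable u v \<and>
     (\<exists>p a b x y. u = p @ a # x \<and> v = p @ b # y \<and> a > b)"

definition divisible :: "nat \<Rightarrow> 'a::linorder list \<Rightarrow> bool" where
  "divisible n W \<longleftrightarrow> (\<exists>us. length us = n \<and> (\<forall>x\<in>set us. x \<noteq> []) \<and>
     (\<forall>i. Suc i < n \<longrightarrow> succ_word (us ! i) (us ! Suc i)) \<and> subword (concat us) W)"

definition reducible :: "nat \<Rightarrow> nat \<Rightarrow> 'a::linorder list \<Rightarrow> bool" where
  "reducible n d W \<longleftrightarrow> divisible n W \<or>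
     (\<exists>u. u \<noteq> [] \<and> subword (concat (replicate d u)) W)"

definition occurs_at :: "'a list \<Rightarrow> 'a list \<Rightarrow> nat \<Rightarrow> bool" where
  "occurs_at u W i \<longleftrightarrow> i + length u \<le> length W \<and> take (length u) (drop i W) = u"

end

theory Submission
  imports Defs "HOL-Library.Sublist" "HOL-Library.List_Lexorder"
begin

text \<open>Compare the n suffixes of u starting at offsets 0, ..., n - 1. If the suffixes starting at
  a < b are not comparable, the shorter one is a prefix of the longer, so u has period b - a from
  position a on; as length u = n d, the factor of length d (b - a) starting at a is a d-th power.
  Otherwise the n suffixes are pairwise comparable. List them in decreasing order and let the
  k-th factor of the division start where the k-th largest suffix begins inside the k-th
  occurrence of u, extending up to the start of the next factor. The factors then begin with
  strictly decreasing comparable words, so they are themselves strictly decreasing.\<close>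

lemma subword_iff_sublist: "subword v W \<longleftrightarrow> sublist v W"
  by (simp add: subword_def sublist_def)

lemma comparable_iff_parallel: "comparable u v \<longleftrightarrow> u \<parallel> v"
  by (auto simp: comparable_def parallel_def prefix_def)

lemma succ_word_append_if_parallel_less:
  fixes x y :: "'a::linorder list"
  assumes "x \<parallel> y" and "y < x"
  shows "succ_word (x @ x') (y @ y')"
proof -
  obtain p a xs b ys where "a \<noteq> b" and x: "x = p @ a # xs" and y: "y = p @ b # ys"
    using parallel_decomp[OF assms(1)] by blast
  have "b # ys < a # xs"
    using assms(2) unfolding x y by (induction p) auto
  with \<open>a \<noteq> b\<close> have "b < a" by auto
  moreover have "comparable (x @ x') (y @ y')"
    unfolding comparable_iff_parallel using assms(1) by (rule parallel_append)
  moreover have "x @ x' = p @ a # (xs @ x')" and "y @ y' = p @ b # (ys @ y')"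
    using x y by simp_all
  ultimately show ?thesis
    unfolding succ_word_def by blast
qed

definition slice :: "'a list \<Rightarrow> nat \<Rightarrow> nat \<Rightarrow> 'a list" where
  "slice W i j = take (j - i) (drop i W)"

lemma sublist_slice: "sublist (slice W i j) W"
  unfolding slice_def by (rule sublist_order.order.trans[OF sublist_take sublist_drop])

lemma slice_append:
  assumes "i \<le> j" and "j \<le> k"
  shows "slice W i j @ slice W j k = slice W i k"
proof -
  have "k - i = (j - i) + (k - j)" and "drop (j - i) (drop i W) = drop j W"
    using assms by simp_all
  then show ?thesis
    unfolding slice_def by (metis take_add)
qed

lemma concat_slices:
  assumes "mono s"
  shows "concat (map (\<lambda>k. slice W (s k) (s (Suc k))) [0..<m]) = slice W (s 0) (s m)"
proof (induction m)
  case 0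
  then show ?case by (simp add: slice_def)
next
  case (Suc m)
  have "s 0 \<le> s m" "s m \<le> s (Suc m)" using monoD[OF assms] by simp_all
  then show ?case using Suc.IH slice_append by simp
qed

lemma slice_occurs_at:
  assumes "occurs_at u W i" and "m \<le> length u"
  shows "slice W (i + m) (i + length u) = drop m u"
proof -
  have "u = take (length u) (drop i W)" using assms(1) unfolding occurs_at_def by simp
  then have "drop m u = take (length u - m) (drop (i + m) W)"
    by (metis add.commute drop_drop drop_take)
  then show ?thesis unfolding slice_def by simp
qed

lemma sublist_if_occurs_at:
  assumes "occurs_at u W i"
  shows "sublist u W"
proof -
  have "slice W i (i + length u) = u" using slice_occurs_at[OF assms, of 0] by simp
  then show ?thesis by (metis sublist_slice)
qed

lemma take_mult_eq_power_if_period: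
  assumes "prefix (drop p v) v" and "j * p \<le> length v"
  shows "take (j * p) v = concat (replicate j (take p v))"
  using assms(2)
proof (induction j)
  case 0
  then show ?case by simp
next
  case (Suc j)
  obtain zs where v: "v = drop p v @ zs"
    using assms(1) by (auto simp: prefix_def)
  have "j * p \<le> length (drop p v)" using Suc.prems by simp
  then have "take (j * p) (drop p v @ zs) = take (j * p) (drop p v)" by simp
  with v have "take (j * p) (drop p v) = take (j * p) v" by metis
  then have "take (p + j * p) v = take p v @ take (j * p) v"
    by (simp add: take_add)
  with Suc show ?case by simp
qed

lemma sublist_power_if_suffix_prefix:
  assumes "a < b" and "prefix (drop b u) (drop a u)"
    and "0 < d" and "a + d * (b - a) \<le> length u"
  shows "\<exists>w. w \<noteq> [] \<and> sublist (concat (replicate d w)) u"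
proof -
  let ?v = "drop a u" and ?p = "b - a"
  have "drop ?p ?v = drop b u" using assms(1) by simp
  with assms have power: "take (d * ?p) ?v = concat (replicate d (take ?p ?v))"
    by (intro take_mult_eq_power_if_period) auto
  have "?p \<le> d * ?p" using assms(3) by simp
  with assms(4) have "a + ?p \<le> length u" by linarith
  with assms(1) have "take ?p ?v \<noteq> []" by simp
  moreover have "sublist (take (d * ?p) ?v) u"
    by (rule sublist_order.order.trans[OF sublist_take sublist_drop])
  ultimately show ?thesis using power by metis
qed

lemma sublist_power_if_suffixes_not_parallel:
  assumes "length u = n * d" and "0 < d"
    and "a < b" and "b < n" and "\<not> drop a u \<parallel> drop b u"
  shows "\<exists>w. w \<noteq> [] \<and> sublist (concat (replicate d w)) u"
proof (rule sublist_power_if_suffix_prefix[OF \<open>a < b\<close> _ \<open>0 < d\<close>])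
  have "n \<le> length u" using assms(1,2) by simp
  with assms(3,4) have "length (drop b u) < length (drop a u)" by simp
  then have "\<not> prefix (drop a u) (drop b u)"
    using prefix_length_le by fastforce
  with assms(5) show "prefix (drop b u) (drop a u)" by (auto simp: parallel_def)
  have "a + d * (b - a) \<le> d * a + d * (b - a)" using assms(2) by simp
  also have "\<dots> = d * b" using assms(3) by (simp add: diff_mult_distrib2)
  also have "\<dots> \<le> length u" using assms(1,4) by simp
  finally show "a + d * (b - a) \<le> length u" .
qed

lemma divisible_if_slices_start_descending:
  fixes W :: "'a::linorder list" and t :: "nat \<Rightarrow> 'a list"
  assumes "mono s"
    and start: "\<forall>k<n. t k \<noteq> [] \<and> prefix (t k) (slice W (s k) (s (Suc k)))"
    and desc: "\<forall>k. Suc k < n \<longrightarrow> t k \<parallel> t (Suc k) \<and> t (Suc k) < t k"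
  shows "divisible n W"
proof -
  define us where "us = map (\<lambda>k. slice W (s k) (s (Suc k))) [0..<n]"
  have piece: "\<exists>r. us ! k = t k @ r" if "k < n" for k
    using start that unfolding us_def by (auto simp: prefix_def)
  have "us ! k \<noteq> []" if "k < n" for k
    using piece[OF that] start that by auto
  then have "\<forall>x\<in>set us. x \<noteq> []" by (auto simp: us_def)
  moreover have "succ_word (us ! k) (us ! Suc k)" if "Suc k < n" for k
    using piece[of k] piece[of "Suc k"] desc that succ_word_append_if_parallel_less by fastforce
  moreover have "subword (concat us) W"
    unfolding us_def concat_slices[OF \<open>mono s\<close>] subword_iff_sublist by (rule sublist_slice)
  ultimately show ?thesis
    unfolding divisible_def by (intro exI[of _ us]) (simp add: us_def)
qed

lemma divisible_if_occurrences_with_descending_suffixes: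
  fixes W u :: "'a::linorder list"
  assumes occ: "\<forall>k<n. occurs_at u W (q k)"
    and gap: "\<forall>k. Suc k < n \<longrightarrow> q k + length u \<le> q (Suc k)"
    and off: "\<forall>k<n. f k < length u"
    and desc: "\<forall>k. Suc k < n \<longrightarrow>
      drop (f k) u \<parallel> drop (f (Suc k)) u \<and> drop (f (Suc k)) u < drop (f k) u"
  shows "divisible n W"
proof -
  define s where "s k = (if k < n then q k + f k else q (n - 1) + length u)" for k
  have end_le: "q k + length u \<le> s (Suc k)" if "k < n" for k
  proof (cases "Suc k < n")
    case True
    then show ?thesis using gap unfolding s_def by (simp add: trans_le_add1)
  next
    case False
    with that have "Suc k = n" by simp
    then show ?thesis unfolding s_def by auto
  qed
  have start_le: "s k \<le> q k + length u" if "k < n" for k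
    using off that unfolding s_def by (simp add: less_imp_le_nat)
  have "mono s"
    unfolding mono_iff_le_Suc
  proof
    fix k
    show "s k \<le> s (Suc k)"
    proof (cases "k < n")
      case True
      then show ?thesis using start_le end_le le_trans by blast
    qed (simp add: s_def)
  qed
  moreover have "prefix (drop (f k) u) (slice W (s k) (s (Suc k)))" if "k < n" for k
  proof -
    have "slice W (s k) (s (Suc k))
        = slice W (s k) (q k + length u) @ slice W (q k + length u) (s (Suc k))"
      using start_le end_le that by (simp add: slice_append)
    also have "slice W (s k) (q k + length u) = drop (f k) u"
      using occ off that unfolding s_def by (simp add: slice_occurs_at less_imp_le_nat)
    finally show ?thesis by simp
  qed
  ultimately show ?thesis
    using off desc by (intro divisible_if_slices_start_descending[of s]) auto
qed

lemma sorted_disjoint_occurrences: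
  assumes "u \<noteq> []"
    and occ: "\<forall>k<n. occurs_at u W (pos k)"
    and disj: "\<forall>j<n. \<forall>k<n. j \<noteq> k \<longrightarrow>
      pos j + length u \<le> pos k \<or> pos k + length u \<le> pos j"
  obtains q where "\<forall>k<n. occurs_at u W (q k)"
    and "\<forall>k. Suc k < n \<longrightarrow> q k + length u \<le> q (Suc k)"
proof -
  have "inj_on pos {..<n}"
    using disj \<open>u \<noteq> []\<close> by (fastforce intro: inj_onI)
  then have len: "length (sorted_list_of_set (pos ` {..<n})) = n"
    by (simp add: card_image)
  define q where "q k = sorted_list_of_set (pos ` {..<n}) ! k" for k
  have q_pos: "\<exists>i<n. q k = pos i" if "k < n" for k
    using nth_mem[of k "sorted_list_of_set (pos ` {..<n})"] len that by (auto simp: q_def)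
  have "q k + length u \<le> q (Suc k)" if k: "Suc k < n" for k
  proof -
    have "q k < q (Suc k)"
      unfolding q_def using len k
      by (intro sorted_wrt_nth_less[OF strict_sorted_list_of_set]) simp_all
    moreover obtain i j where "i < n" "j < n" "q k = pos i" "q (Suc k) = pos j"
      using q_pos k by (meson Suc_lessD)
    ultimately show ?thesis using disj by fastforce
  qed
  moreover have "occurs_at u W (q k)" if "k < n" for k
    using q_pos[OF that] occ by auto
  ultimately show ?thesis using that by blast
qed

lemma descending_enumeration:
  fixes f :: "'b \<Rightarrow> 'c::linorder"
  assumes "finite A" and "inj_on f A"
  obtains e where "\<forall>k<card A. e k \<in> A"
    and "\<forall>k. Suc k < card A \<longrightarrow> f (e (Suc k)) < f (e k)"
proof -
  define L where "L = rev (sorted_list_of_set (f ` A))"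
  have len: "length L = card A"
    using assms by (simp add: L_def card_image)
  have desc: "sorted_wrt (>) L"
    unfolding L_def sorted_wrt_rev by (rule strict_sorted_list_of_set)
  define e where "e k = inv_into A f (L ! k)" for k
  have "L ! k \<in> f ` A" if "k < card A" for k
    using nth_mem[of k L] len assms(1) that by (simp add: L_def)
  then have "e k \<in> A \<and> f (e k) = L ! k" if "k < card A" for k
    using that by (simp add: e_def inv_into_into f_inv_into_f)
  with sorted_wrt_nth_less[OF desc] len show ?thesis
    using that by (metis Suc_lessD lessI)
qed

lemma descending_parallel_suffixes:
  fixes u :: "'a::linorder list"
  assumes "n \<le> length u" and par: "\<forall>a b. a < b \<and> b < n \<longrightarrow> drop a u \<parallel> drop b u"
  obtains f where "\<forall>k<n. f k < length u"
    and "\<forall>k. Suc k < n \<longrightarrow>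
      drop (f k) u \<parallel> drop (f (Suc k)) u \<and> drop (f (Suc k)) u < drop (f k) u"
proof -
  have "inj_on (\<lambda>i. drop i u) {..<n}"
    using assms(1)
    by (intro inj_onI) (metis length_drop diff_diff_cancel lessThan_iff less_imp_le_nat order_less_le_trans)
  then obtain f where off: "\<forall>k<n. f k < n"
    and desc: "\<forall>k. Suc k < n \<longrightarrow> drop (f (Suc k)) u < drop (f k) u"
    using descending_enumeration[of "{..<n}" "\<lambda>i. drop i u"] by auto
  have "drop (f k) u \<parallel> drop (f (Suc k)) u" if k: "Suc k < n" for k
  proof -
    have "f k \<noteq> f (Suc k)" using desc k by auto
    moreover have "f k < n" "f (Suc k) < n" using off k by simp_all
    ultimately show ?thesis
      using par parallel_commute by (metis nat_neq_iff)
  qed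
  moreover have "\<forall>k<n. f k < length u" using off assms(1) by auto
  ultimately show ?thesis using desc that by blast
qed

theorem lemmac:
  fixes W u :: "'a::linorder list" and n d :: nat and pos :: "nat \<Rightarrow> nat"
  assumes "n \<ge> 1" and "d \<ge> 1"
    and "length u = n * d"
    and "\<forall>k<n. occurs_at u W (pos k)"
    and "\<forall>j<n. \<forall>k<n. j \<noteq> k \<longrightarrow> pos j + length u \<le> pos k \<or> pos k + length u \<le> pos j"
  shows "reducible n d W"
proof -
  have "n \<le> length u" using assms(2,3) by simp
  with assms(1) have "u \<noteq> []" by auto
  then obtain q where occ: "\<forall>k<n. occurs_at u W (q k)"
    and gap: "\<forall>k. Suc k < n \<longrightarrow> q k + length u \<le> q (Suc k)"
    using sorted_disjoint_occurrences assms(4,5) by blast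
  show ?thesis
  proof (cases "\<forall>a b. a < b \<and> b < n \<longrightarrow> drop a u \<parallel> drop b u")
    case True
    with \<open>n \<le> length u\<close> obtain f where "\<forall>k<n. f k < length u"
      and "\<forall>k. Suc k < n \<longrightarrow>
        drop (f k) u \<parallel> drop (f (Suc k)) u \<and> drop (f (Suc k)) u < drop (f k) u"
      by (rule descending_parallel_suffixes)
    with occ gap have "divisible n W"
      by (rule divisible_if_occurrences_with_descending_suffixes)
    then show ?thesis unfolding reducible_def by simp
  next
    case False
    then obtain a b where "a < b" "b < n" "\<not> drop a u \<parallel> drop b u" by blast
    with assms(2,3) obtain w where "w \<noteq> []" "sublist (concat (replicate d w)) u"
      using sublist_power_if_suffixes_not_parallel[of u n d a b] by auto
    moreover have "sublist u W" using occ assms(1) sublist_if_occurs_at by auto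
    ultimately show ?thesis
      unfolding reducible_def subword_iff_sublist by (blast intro: sublist_order.order.trans)
  qed
qed

end
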